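(* Let $\mathcal H$ be a family of graphs. The following are equivalent: (i) there is a constant $c=c(\mathcal H)$ such that every connected $\mathcal H$-free graph $G$ has fewer than $c$ vertices of degree at least $2$; (ii) there is a positive integer $n$ such that $\mathcal H\le \{K_n,\ P_n,\ K_{1,n}^*,\ K_{2,n},\ K_2+nK_1,\ K_1+nK_2\}$.
   Context: All graphs are finite, simple, undirected. For graphs $H_1,H_2$, write $H_1\prec H_2$ if $H_2$ contains an induced subgraph isomorphic to $H_1$. A graph $G$ is $\mathcal H$-free if no $H\in\mathcal H$ satisfies $H\prec G$. For families $\mathcal H_1,\mathcal H_2$, write $\mathcal H_1\le\mathcal H_2$ if for every $H_2\in\mathcal H_2$ there is $H_1\in\mathcal H_1$ with $H_1\prec H_2$. $K_n$, $E_n$, $P_n$ are the complete graph, edgeless graph, and path on $n$ vertices; $K_{s,t}$ is the complete bipartite graph; $nG$ is the disjoint union of $n$ copies of $G$; $G_1+G_2$ is the join (disjoint union plus all edges between $V(G_1)$ and $V(G_2)$). $K_{1,n}^*$ is the graph obtained from the star $K_{1,n}$ by attaching a new pendant vertex to each leaf. *)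

theory Defs
  imports Main
begin

text \<open>A (finite, simple, undirected) graph is a pair of a vertex set and an
adjacency relation. Families of graphs are sets of graphs on vertex type nat
(every finite graph is isomorphic to one on nat).\<close>

type_synonym 'a graph = "'a set \<times> ('a \<Rightarrow> 'a \<Rightarrow> bool)"

definition verts :: "'a graph \<Rightarrow> 'a set" where "verts G = fst G"
definition adj :: "'a graph \<Rightarrow> 'a \<Rightarrow> 'a \<Rightarrow> bool" where "adj G = snd G"

definition is_graph :: "'a graph \<Rightarrow> bool" where
  "is_graph G \<longleftrightarrow> finite (verts G)
     \<and> (\<forall>x y. adj G x y \<longrightarrow> x \<in> verts G \<and> y \<in> verts G)
     \<and> (\<forall>x y. adj G x y \<longrightarrow> adj G y x)
     \<and> (\<forall>x. \<not> adj G x x)"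

definition induced_sub :: "'a graph \<Rightarrow> 'b graph \<Rightarrow> bool" (infix "\<prec>" 50) where
  "H \<prec> G \<longleftrightarrow> (\<exists>f. inj_on f (verts H) \<and> f ` verts H \<subseteq> verts G
      \<and> (\<forall>x\<in>verts H. \<forall>y\<in>verts H. adj H x y \<longleftrightarrow> adj G (f x) (f y)))"

definition family_free :: "'a graph set \<Rightarrow> 'b graph \<Rightarrow> bool" where
  "family_free \<H> G \<longleftrightarrow> (\<forall>H\<in>\<H>. \<not> H \<prec> G)"

definition family_le :: "'a graph set \<Rightarrow> 'b graph set \<Rightarrow> bool" where
  "family_le \<H>1 \<H>2 \<longleftrightarrow> (\<forall>H2\<in>\<H>2. \<exists>H1\<in>\<H>1. H1 \<prec> H2)"

definition degree :: "'a graph \<Rightarrow> 'a \<Rightarrow> nat" where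
  "degree G v = card {u \<in> verts G. adj G v u}"

definition connected :: "'a graph \<Rightarrow> bool" where
  "connected G \<longleftrightarrow> verts G \<noteq> {} \<and>
     (\<forall>x\<in>verts G. \<forall>y\<in>verts G. (adj G)\<^sup>*\<^sup>* x y)"

definition complete_graph :: "nat \<Rightarrow> nat graph" where
  "complete_graph n = ({0..<n}, \<lambda>x y. x < n \<and> y < n \<and> x \<noteq> y)"

definition path_graph :: "nat \<Rightarrow> nat graph" where
  "path_graph n = ({0..<n}, \<lambda>x y. x < n \<and> y < n \<and> (x = y + 1 \<or> y = x + 1))"

definition complete_bipartite :: "nat \<Rightarrow> nat \<Rightarrow> nat graph" where
  "complete_bipartite s t = ({0..<s+t}, \<lambda>x y. x < s + t \<and> y < s + t \<and> (x < s \<longleftrightarrow> \<not> y < s))"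

text \<open>K_{1,n}^*: centre 0, leaves 1..n, pendant vertex i+n attached to leaf i.\<close>
definition subdivided_star :: "nat \<Rightarrow> nat graph" where
  "subdivided_star n = ({0..2*n}, \<lambda>x y.
      (x = 0 \<and> 1 \<le> y \<and> y \<le> n) \<or> (y = 0 \<and> 1 \<le> x \<and> x \<le> n)
    \<or> (1 \<le> x \<and> x \<le> n \<and> y = x + n) \<or> (1 \<le> y \<and> y \<le> n \<and> x = y + n))"

definition K2_join_nK1 :: "nat \<Rightarrow> nat graph" where
  "K2_join_nK1 n = ({0..<n+2}, \<lambda>x y. x < n + 2 \<and> y < n + 2 \<and> x \<noteq> y \<and> (x < 2 \<or> y < 2))"

text \<open>K_1 + nK_2: vertex 0 joined to the n disjoint edges {2i-1, 2i}, 1 \<le> i \<le> n.\<close>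
definition K1_join_nK2 :: "nat \<Rightarrow> nat graph" where
  "K1_join_nK2 n = ({0..2*n}, \<lambda>x y. x \<le> 2*n \<and> y \<le> 2*n \<and> x \<noteq> y \<and>
      (x = 0 \<or> y = 0 \<or> (x - 1) div 2 = (y - 1) div 2))"

definition unavoidable_family :: "nat \<Rightarrow> nat graph set" where
  "unavoidable_family n = {complete_graph n, path_graph n, subdivided_star n,
      complete_bipartite 2 n, K2_join_nK1 n, K1_join_nK2 n}"

end

theory Submission
  imports Defs "HOL-Library.Ramsey"
begin

text \<open>Write U_n for the family of the six graphs with parameter n. If H <= U_n, every H-free graph G
  is U_n-free. A vertex of degree one has a single neighbour, so the vertices of degree at least 2
  induce a connected subgraph G'. It has no induced P_n, so if its degrees are at most d,
  breadth-first search from any vertex exhausts G' within n layers and G' has at most (d + 1)^n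
  vertices. A vertex v of large degree in G' is ruled out by iterated Ramsey arguments: each
  neighbour u_i of v in G' has a neighbour w_i other than v, and making homogeneous the edges among
  the u_i, those between the w_i and the u_j, and those among the w_i produces K_n, K_{2,n},
  K_2 + nK_1, K_{1,n}^* or K_1 + nK_2.
  Conversely, every graph in U_n is connected and has at least n - 2 vertices of degree at least 2;
  if H <= U_n fails, one of them is H-free.\<close>

(* HOL-Library.Ramsey imports Equipollence, whose \<prec> would clash with induced_sub. *)
no_notation lesspoll (infixl \<open>\<prec>\<close> 50)

subsection \<open>Graphs and induced subgraphs\<close>

lemma is_graphD:
  assumes "is_graph G"
  shows "finite (verts G)" "adj G x y \<Longrightarrow> x \<in> verts G" "adj G x y \<Longrightarrow> y \<in> verts G"
    "adj G x y \<Longrightarrow> adj G y x" "\<not> adj G x x"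
  using assms unfolding is_graph_def by blast+

lemma symp_adj: "is_graph G \<Longrightarrow> symp (adj G)"
  by (blast intro: sympI is_graphD(4))

lemma induced_sub_trans: "H \<prec> F \<Longrightarrow> F \<prec> G \<Longrightarrow> H \<prec> G"
  unfolding induced_sub_def
proof (elim exE conjE)
  fix f g
  assume f: "inj_on f (verts H)" "f ` verts H \<subseteq> verts F"
    "\<forall>x\<in>verts H. \<forall>y\<in>verts H. adj H x y \<longleftrightarrow> adj F (f x) (f y)"
  assume g: "inj_on g (verts F)" "g ` verts F \<subseteq> verts G"
    "\<forall>x\<in>verts F. \<forall>y\<in>verts F. adj F x y \<longleftrightarrow> adj G (g x) (g y)"
  have "inj_on (g \<circ> f) (verts H)"
    using f g by (blast intro: comp_inj_on inj_on_subset)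
  with f g show "\<exists>h. inj_on h (verts H) \<and> h ` verts H \<subseteq> verts G
      \<and> (\<forall>x\<in>verts H. \<forall>y\<in>verts H. adj H x y \<longleftrightarrow> adj G (h x) (h y))"
    by (intro exI[of _ "g \<circ> f"]) (auto simp: image_subset_iff)
qed

lemma family_free_if_le: "family_le \<H>\<^sub>1 \<H>\<^sub>2 \<Longrightarrow> family_free \<H>\<^sub>1 G \<Longrightarrow> family_free \<H>\<^sub>2 G"
  unfolding family_le_def family_free_def using induced_sub_trans by blast

definition induced_subgraph :: "'a graph \<Rightarrow> 'a set \<Rightarrow> 'a graph" where
  "induced_subgraph G D = (D, \<lambda>x y. adj G x y \<and> x \<in> D \<and> y \<in> D)"

lemma verts_induced_subgraph [simp]: "verts (induced_subgraph G D) = D"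
  and adj_induced_subgraph [simp]:
    "adj (induced_subgraph G D) x y \<longleftrightarrow> adj G x y \<and> x \<in> D \<and> y \<in> D"
  by (simp_all add: induced_subgraph_def verts_def adj_def)

lemma is_graph_induced_subgraph:
  "is_graph G \<Longrightarrow> D \<subseteq> verts G \<Longrightarrow> is_graph (induced_subgraph G D)"
  unfolding is_graph_def by (auto intro: finite_subset)

lemma induced_subgraph_induced_sub: "D \<subseteq> verts G \<Longrightarrow> induced_subgraph G D \<prec> G"
  unfolding induced_sub_def by (intro exI[of _ id]) auto

lemma degree_induced_subgraph:
  "x \<in> D \<Longrightarrow> degree (induced_subgraph G D) x = card {y \<in> D. adj G x y}"
  unfolding degree_def by (auto intro: arg_cong[where f = card])

definition inner_vertices :: "'a graph \<Rightarrow> 'a set" where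
  "inner_vertices G = {v \<in> verts G. 2 \<le> degree G v}"

lemma finite_inner_vertices: "is_graph G \<Longrightarrow> finite (inner_vertices G)"
  unfolding inner_vertices_def using is_graphD(1)[of G] by simp

lemma inner_vertices_subset: "inner_vertices G \<subseteq> verts G"
  unfolding inner_vertices_def by blast

lemma inner_verticesI:
  assumes "is_graph G" "a \<noteq> b" "adj G x a" "adj G x b"
  shows "x \<in> inner_vertices G"
proof -
  have "{a, b} \<subseteq> {u \<in> verts G. adj G x u}"
    using assms is_graphD(3)[OF assms(1)] by blast
  then have "card {a, b} \<le> degree G x"
    unfolding degree_def using is_graphD(1)[OF assms(1)] by (intro card_mono) auto
  then show ?thesis
    unfolding inner_vertices_def using assms is_graphD(2)[OF assms(1)] by auto
qed

lemma other_neighbour_if_inner: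
  assumes "is_graph G" "x \<in> inner_vertices G"
  obtains z where "adj G x z" "z \<noteq> v"
proof -
  have "\<not> {z \<in> verts G. adj G x z} \<subseteq> {v}"
    using assms(2) card_mono[of "{v}" "{z \<in> verts G. adj G x z}"]
    unfolding inner_vertices_def degree_def by auto
  then show ?thesis using that by blast
qed

lemma unique_neighbour_if_not_inner:
  assumes "is_graph G" "x \<notin> inner_vertices G" "adj G x p" "adj G x q"
  shows "p = q"
  using inner_verticesI[OF assms(1) _ assms(3,4)] assms(2) by blast

text \<open>A walk leaving the inner vertices enters a leaf and must return the way it came, so the
  inner vertices of a connected graph induce a connected subgraph.\<close>

lemma connected_inner_vertices:
  assumes G: "is_graph G" and "connected G" and x: "x \<in> inner_vertices G"
  shows "connected (induced_subgraph G (inner_vertices G))"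
proof -
  let ?D = "inner_vertices G"
  let ?A = "adj (induced_subgraph G ?D)"
  have walk: "(z \<in> ?D \<and> ?A\<^sup>*\<^sup>* x z) \<or> (z \<notin> ?D \<and> (\<exists>p\<in>?D. adj G z p \<and> ?A\<^sup>*\<^sup>* x p))"
    if "(adj G)\<^sup>*\<^sup>* x z" for z
    using that
  proof (induction rule: rtranclp_induct)
    case base
    then show ?case using x by simp
  next
    case (step z z')
    show ?case
    proof (cases "z \<in> ?D")
      case True
      then show ?thesis
        using step is_graphD(4)[OF G] by (auto intro: rtranclp.rtrancl_into_rtrancl)
    next
      case False
      then show ?thesis
        using step unique_neighbour_if_not_inner[OF G False] by blast
    qed
  qed
  have "?A\<^sup>*\<^sup>* x y" if "y \<in> ?D" for y
  proof -
    have "(adj G)\<^sup>*\<^sup>* x y"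
      using \<open>connected G\<close> x that inner_vertices_subset[of G] unfolding connected_def by blast
    then show ?thesis using walk that by blast
  qed
  then have "?A\<^sup>*\<^sup>* y z" if "y \<in> ?D" "z \<in> ?D" for y z
    using that symp_rtranclp[OF symp_adj[OF is_graph_induced_subgraph[OF G inner_vertices_subset]]]
    by (meson rtranclp_trans sympD)
  then show ?thesis
    unfolding connected_def using x by auto
qed

lemma connectedI_centre:
  assumes G: "is_graph G" and c: "c \<in> verts G"
    and reach: "\<And>x. x \<in> verts G \<Longrightarrow> (adj G)\<^sup>*\<^sup>* x c"
  shows "connected G"
proof -
  have "(adj G)\<^sup>*\<^sup>* c y" if "y \<in> verts G" for y
    using reach[OF that] symp_rtranclp[OF symp_adj[OF G]] by (simp add: sympD)
  then show ?thesis
    unfolding connected_def using c reach by (blast intro: rtranclp_trans)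
qed

subsection \<open>The unavoidable graphs\<close>

lemma complete_graph_simps [simp]:
  "verts (complete_graph n) = {0..<n}"
  "adj (complete_graph n) x y \<longleftrightarrow> x < n \<and> y < n \<and> x \<noteq> y"
  by (simp_all add: verts_def adj_def complete_graph_def)

lemma path_graph_simps [simp]:
  "verts (path_graph n) = {0..<n}"
  "adj (path_graph n) x y \<longleftrightarrow> x < n \<and> y < n \<and> (x = y + 1 \<or> y = x + 1)"
  by (simp_all add: verts_def adj_def path_graph_def)

lemma complete_bipartite_simps [simp]:
  "verts (complete_bipartite s t) = {0..<s + t}"
  "adj (complete_bipartite s t) x y \<longleftrightarrow> x < s + t \<and> y < s + t \<and> (x < s \<longleftrightarrow> \<not> y < s)"
  by (simp_all add: verts_def adj_def complete_bipartite_def)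

lemma subdivided_star_simps [simp]:
  "verts (subdivided_star n) = {0..2 * n}"
  "adj (subdivided_star n) x y \<longleftrightarrow> (x = 0 \<and> 1 \<le> y \<and> y \<le> n) \<or> (y = 0 \<and> 1 \<le> x \<and> x \<le> n)
    \<or> (1 \<le> x \<and> x \<le> n \<and> y = x + n) \<or> (1 \<le> y \<and> y \<le> n \<and> x = y + n)"
  by (simp_all add: verts_def adj_def subdivided_star_def)

lemma K2_join_nK1_simps [simp]:
  "verts (K2_join_nK1 n) = {0..<n + 2}"
  "adj (K2_join_nK1 n) x y \<longleftrightarrow> x < n + 2 \<and> y < n + 2 \<and> x \<noteq> y \<and> (x < 2 \<or> y < 2)"
  by (simp_all add: verts_def adj_def K2_join_nK1_def)

lemma K1_join_nK2_simps [simp]: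
  "verts (K1_join_nK2 n) = {0..2 * n}"
  "adj (K1_join_nK2 n) x y \<longleftrightarrow> x \<le> 2 * n \<and> y \<le> 2 * n \<and> x \<noteq> y \<and>
      (x = 0 \<or> y = 0 \<or> (x - 1) div 2 = (y - 1) div 2)"
  by (simp_all add: verts_def adj_def K1_join_nK2_def)

lemma is_graph_unavoidable: "F \<in> unavoidable_family n \<Longrightarrow> is_graph F"
  unfolding unavoidable_family_def is_graph_def by auto

lemma connected_unavoidable:
  assumes "0 < n" and F: "F \<in> unavoidable_family n"
  shows "connected F"
proof (rule connectedI_centre[OF is_graph_unavoidable[OF F]])
  show "0 \<in> verts F"
    using assms unfolding unavoidable_family_def by auto
  fix x
  assume x: "x \<in> verts F"
  have one_step: "(adj F)\<^sup>*\<^sup>* x 0" if "x = 0 \<or> adj F x 0"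
    using that by auto
  have two_steps: "(adj F)\<^sup>*\<^sup>* x 0" if "adj F x y" "adj F y 0" for y
    using that by (meson converse_rtranclp_into_rtranclp r_into_rtranclp)
  have path: "(adj (path_graph n))\<^sup>*\<^sup>* x 0" if "x < n" for x
    using that
  proof (induction x)
    case (Suc x)
    have "adj (path_graph n) (Suc x) x"
      using Suc.prems by simp
    then show ?case
      using Suc.IH[OF Suc_lessD[OF Suc.prems]] by (rule converse_rtranclp_into_rtranclp)
  qed simp
  show "(adj F)\<^sup>*\<^sup>* x 0"
    using F unfolding unavoidable_family_def
  proof (elim insertE emptyE)
    assume "F = path_graph n"
    with x path show ?thesis by simp
  next
    assume F: "F = subdivided_star n"
    show ?thesis
    proof (cases "n < x")
      case True
      then show ?thesis using x F by (intro two_steps[of "x - n"]) auto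
    next
      case False
      then have "x = 0 \<or> adj F x 0" using x F by auto
      then show ?thesis by (rule one_step)
    qed
  next
    assume F: "F = complete_bipartite 2 n"
    show ?thesis
    proof (cases "x = 1")
      case True
      then show ?thesis using \<open>0 < n\<close> F by (intro two_steps[of 2]) auto
    next
      case False
      then have "x = 0 \<or> adj F x 0" using x F by auto
      then show ?thesis by (rule one_step)
    qed
  qed (rule one_step, insert x, force)+
qed

lemma card_inner_vertices_unavoidable:
  assumes F: "F \<in> unavoidable_family n"
  shows "n - 2 \<le> card (inner_vertices F)"
proof -
  have inner: "S \<subseteq> inner_vertices F"
    if "\<And>x. x \<in> S \<Longrightarrow> adj F x (a x) \<and> adj F x (b x) \<and> a x \<noteq> b x" for S a b
    using inner_verticesI[OF is_graph_unavoidable[OF F]] that by blast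
  have "\<exists>S \<subseteq> inner_vertices F. n - 2 \<le> card S"
    using F unfolding unavoidable_family_def
  proof (elim insertE emptyE)
    assume "F = complete_graph n"
    then have "{0..<n - 2} \<subseteq> inner_vertices F"
      by (intro inner[where a = "\<lambda>_. n - 1" and b = "\<lambda>_. n - 2"]) auto
    then show ?thesis by (intro exI[of _ "{0..<n - 2}"]) simp
  next
    assume "F = path_graph n"
    then have "{1..<n - 1} \<subseteq> inner_vertices F"
      by (intro inner[where a = "\<lambda>x. x - 1" and b = "\<lambda>x. x + 1"]) auto
    then show ?thesis by (intro exI[of _ "{1..<n - 1}"]) simp
  next
    assume "F = subdivided_star n"
    then have "{1..n} \<subseteq> inner_vertices F"
      by (intro inner[where a = "\<lambda>_. 0" and b = "\<lambda>x. x + n"]) auto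
    then show ?thesis by (intro exI[of _ "{1..n}"]) simp
  next
    assume "F = complete_bipartite 2 n"
    then have "{2..<n + 2} \<subseteq> inner_vertices F"
      by (intro inner[where a = "\<lambda>_. 0" and b = "\<lambda>_. 1"]) auto
    then show ?thesis by (intro exI[of _ "{2..<n + 2}"]) simp
  next
    assume "F = K2_join_nK1 n"
    then have "{2..<n + 2} \<subseteq> inner_vertices F"
      by (intro inner[where a = "\<lambda>_. 0" and b = "\<lambda>_. 1"]) auto
    then show ?thesis by (intro exI[of _ "{2..<n + 2}"]) simp
  next
    assume "F = K1_join_nK2 n"
    then have "(\<lambda>k. 2 * k + 1) ` {..<n} \<subseteq> inner_vertices F"
      by (intro inner[where a = "\<lambda>_. 0" and b = "\<lambda>x. x + 1"]) auto
    moreover have "card ((\<lambda>k. 2 * k + 1) ` {..<n}) = n"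
      by (simp add: card_image inj_on_def)
    ultimately show ?thesis by (intro exI[of _ "(\<lambda>k. 2 * k + 1) ` {..<n}"]) simp
  qed
  then show ?thesis
    using card_mono[OF finite_inner_vertices[OF is_graph_unavoidable[OF F]]] le_trans by blast
qed

subsection \<open>Breadth-first search\<close>

primrec graph_ball :: "'a graph \<Rightarrow> 'a \<Rightarrow> nat \<Rightarrow> 'a set" where
  "graph_ball G r 0 = {r}"
| "graph_ball G r (Suc k) = graph_ball G r k \<union> {y. \<exists>x \<in> graph_ball G r k. adj G x y}"

lemma graph_ball_subset: "is_graph G \<Longrightarrow> r \<in> verts G \<Longrightarrow> graph_ball G r k \<subseteq> verts G"
  by (induction k) (auto dest: is_graphD(3))

lemma graph_ball_mono: "k \<le> m \<Longrightarrow> graph_ball G r k \<subseteq> graph_ball G r m"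
  by (induction m) (auto simp: le_Suc_eq)

lemma card_graph_ball:
  assumes G: "is_graph G" and r: "r \<in> verts G" and deg: "\<forall>x\<in>verts G. degree G x \<le> d"
  shows "card (graph_ball G r k) \<le> (d + 1) ^ k"
proof (induction k)
  case (Suc k)
  let ?B = "graph_ball G r k" and ?N = "\<lambda>x. {y \<in> verts G. adj G x y}"
  have fin: "finite ?B"
    using graph_ball_subset[OF G r] is_graphD(1)[OF G] by (rule finite_subset)
  have "graph_ball G r (Suc k) = ?B \<union> (\<Union>x\<in>?B. ?N x)"
    using is_graphD(3)[OF G] by auto
  then have "card (graph_ball G r (Suc k)) \<le> card ?B + card (\<Union>x\<in>?B. ?N x)"
    by (simp add: card_Un_le)
  moreover have "card (\<Union>x\<in>?B. ?N x) \<le> (\<Sum>x\<in>?B. card (?N x))"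
    by (rule card_UN_le[OF fin])
  moreover have "(\<Sum>x\<in>?B. card (?N x)) \<le> card ?B * d"
    using sum_bounded_above[of ?B "\<lambda>x. card (?N x)" d] deg graph_ball_subset[OF G r]
    unfolding degree_def by auto
  ultimately have "card (graph_ball G r (Suc k)) \<le> card ?B * (d + 1)"
    by simp
  also have "\<dots> \<le> (d + 1) ^ Suc k"
    using mult_le_mono1[OF Suc.IH] by (simp only: power_Suc mult.commute)
  finally show ?case .
qed simp

lemma graph_ball_stable:
  assumes "graph_ball G r (Suc k) \<subseteq> graph_ball G r k" and "(adj G)\<^sup>*\<^sup>* r y"
  shows "y \<in> graph_ball G r k"
  using assms(2)
proof (induction rule: rtranclp_induct)
  case base
  show ?case using graph_ball_mono[of 0 k G r] by simp
next
  case (step y z)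
  then show ?case using assms(1) by auto
qed

definition geodesic :: "'a graph \<Rightarrow> 'a \<Rightarrow> (nat \<Rightarrow> 'a) \<Rightarrow> nat \<Rightarrow> bool" where
  "geodesic G r f k \<longleftrightarrow> (\<forall>i\<le>k. f i \<in> graph_ball G r i \<and> (\<forall>j<i. f i \<notin> graph_ball G r j))
     \<and> (\<forall>i<k. adj G (f i) (f (Suc i)))"

lemma geodesic_exists:
  assumes "y \<in> graph_ball G r k" "\<forall>j<k. y \<notin> graph_ball G r j"
  shows "\<exists>f. f k = y \<and> geodesic G r f k"
  using assms unfolding geodesic_def
proof (induction k arbitrary: y)
  case 0
  then show ?case by (intro exI[of _ "\<lambda>_. y"]) simp
next
  case (Suc k)
  then obtain x where x: "x \<in> graph_ball G r k" "adj G x y"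
    by auto
  have "x \<notin> graph_ball G r j" if "j < k" for j
    using Suc.prems(2) x(2) that graph_ball_mono[of "Suc j" k G r] by auto
  then obtain f where "f k = x" "\<forall>i\<le>k. f i \<in> graph_ball G r i \<and> (\<forall>j<i. f i \<notin> graph_ball G r j)"
    "\<forall>i<k. adj G (f i) (f (Suc i))"
    using Suc.IH[OF x(1)] by blast
  then show ?case
    using Suc.prems x by (intro exI[of _ "f(Suc k := y)"]) (auto simp: le_Suc_eq less_Suc_eq)
qed

lemma path_graph_induced_sub_if_geodesic:
  assumes G: "is_graph G" and r: "r \<in> verts G" and "geodesic G r f k" and m: "m \<le> Suc k"
  shows "path_graph m \<prec> G"
  unfolding induced_sub_def
proof (intro exI[of _ f] conjI)
  have layer: "\<And>i. i \<le> k \<Longrightarrow> f i \<in> graph_ball G r i"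
      "\<And>i j. i \<le> k \<Longrightarrow> j < i \<Longrightarrow> f i \<notin> graph_ball G r j"
    and step: "\<And>i. i < k \<Longrightarrow> adj G (f i) (f (Suc i))"
    using \<open>geodesic G r f k\<close> unfolding geodesic_def by blast+
  have far: "\<not> adj G (f i) (f j)" if "Suc i < j" "j \<le> k" for i j
    using layer(1)[of i] layer(2)[of j "Suc i"] that by auto
  have neq: "f i \<noteq> f j" if "i < j" "j \<le> k" for i j
    using layer(1)[of i] layer(2)[of j i] that by auto
  show "inj_on f (verts (path_graph m))"
  proof (rule inj_onI)
    fix i j
    assume "i \<in> verts (path_graph m)" "j \<in> verts (path_graph m)" "f i = f j"
    then show "i = j"
      using neq[of i j] neq[of j i] m by (cases i j rule: linorder_cases) auto
  qed
  show "f ` verts (path_graph m) \<subseteq> verts G"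
  proof (rule image_subsetI)
    fix i
    assume "i \<in> verts (path_graph m)"
    then have "i \<le> k" using m by auto
    then show "f i \<in> verts G" using layer(1) graph_ball_subset[OF G r] by blast
  qed
  show "\<forall>i\<in>verts (path_graph m). \<forall>j\<in>verts (path_graph m).
      adj (path_graph m) i j \<longleftrightarrow> adj G (f i) (f j)"
  proof (intro ballI)
    fix i j
    assume ij: "i \<in> verts (path_graph m)" "j \<in> verts (path_graph m)"
    then have "i \<le> k" "j \<le> k"
      using m by auto
    consider "Suc i < j" | "Suc j < i" | "i = j" | "j = Suc i" | "i = Suc j"
      by linarith
    then show "adj (path_graph m) i j \<longleftrightarrow> adj G (f i) (f j)"
    proof cases
      case 1
      then show ?thesis using far \<open>j \<le> k\<close> by auto
    next
      case 2
      then show ?thesis using far[of j i] \<open>i \<le> k\<close> is_graphD(4)[OF G] by auto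
    next
      case 3
      then show ?thesis using is_graphD(5)[OF G] by simp
    next
      case 4
      then show ?thesis using step[of i] ij \<open>j \<le> k\<close> by auto
    next
      case 5
      then show ?thesis using step[of j] ij \<open>i \<le> k\<close> is_graphD(4)[OF G] by auto
    qed
  qed
qed

lemma card_verts_le_if_path_free:
  assumes G: "is_graph G" and conn: "connected G" and deg: "\<forall>x\<in>verts G. degree G x \<le> d"
    and no_path: "\<not> path_graph n \<prec> G"
  shows "card (verts G) \<le> (d + 1) ^ n"
proof -
  obtain r where r: "r \<in> verts G"
    using conn unfolding connected_def by blast
  show ?thesis
  proof (cases "graph_ball G r (Suc n) \<subseteq> graph_ball G r n")
    case True
    have "verts G \<subseteq> graph_ball G r n"
    proof
      fix y
      assume "y \<in> verts G"
      then have "(adj G)\<^sup>*\<^sup>* r y"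
        using conn r unfolding connected_def by blast
      then show "y \<in> graph_ball G r n"
        by (rule graph_ball_stable[OF True])
    qed
    then have "card (verts G) \<le> card (graph_ball G r n)"
      by (rule card_mono[OF finite_subset[OF graph_ball_subset[OF G r] is_graphD(1)[OF G]]])
    also have "\<dots> \<le> (d + 1) ^ n"
      by (rule card_graph_ball[OF G r deg])
    finally show ?thesis .
  next
    case False
    then obtain y where y: "y \<in> graph_ball G r (Suc n)" "y \<notin> graph_ball G r n"
      by blast
    have "\<forall>j<Suc n. y \<notin> graph_ball G r j"
      using y(2) graph_ball_mono[of _ n G r] by (auto simp: less_Suc_eq_le)
    then obtain f where "geodesic G r f (Suc n)"
      using geodesic_exists[OF y(1)] by blast
    then have "path_graph n \<prec> G"
      by (rule path_graph_induced_sub_if_geodesic[OF G r]) simp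
    with no_path show ?thesis ..
  qed
qed

subsection \<open>Ramsey numbers\<close>

definition ramsey_number :: "nat \<Rightarrow> nat" where
  "ramsey_number k = (LEAST N. partn_lst {..<N} [k, k] 2)"

lemma partn_lst_ramsey_number: "partn_lst {..<ramsey_number k} [k, k] 2"
  unfolding ramsey_number_def by (metis LeastI_ex ramsey_full)

lemma ramsey_number_homogeneous:
  fixes A :: "'a::linorder set"
  assumes "finite A" "ramsey_number k \<le> card A"
  obtains B where "B \<subseteq> A" "card B = k"
    "(\<forall>i\<in>B. \<forall>j\<in>B. i < j \<longrightarrow> P i j) \<or> (\<forall>i\<in>B. \<forall>j\<in>B. i < j \<longrightarrow> \<not> P i j)"
proof -
  let ?N = "ramsey_number k"
  obtain h where h: "h ` {..<?N} \<subseteq> A" "inj_on h {..<?N}"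
    using card_le_inj[of "{..<?N}" A] assms by auto
  define c where "c X = (if P (Min (h ` X)) (Max (h ` X)) then 0 else 1::nat)" for X
  have "c \<in> nsets {..<?N} 2 \<rightarrow> {..<2}"
    by (simp add: c_def)
  then obtain i H where i: "i < 2" and H: "H \<in> nsets {..<?N} ([k, k] ! i)"
    and mono: "c ` nsets H 2 \<subseteq> {i}"
    using partn_lstE[OF partn_lst_ramsey_number] by (metis length_Cons list.size(3) numeral_2_eq_2)
  have H': "H \<subseteq> {..<?N}" "card H = k"
    using i H by (auto simp: nsets_def less_2_cases_iff)
  have hom: "P x y \<longleftrightarrow> i = 0" if xy: "x \<in> h ` H" "y \<in> h ` H" "x < y" for x y
  proof -
    obtain a b where "a \<in> H" "b \<in> H" "x = h a" "y = h b"
      using xy(1,2) by blast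
    then have "{a, b} \<in> nsets H 2"
      using xy(3) by auto
    then have "c {a, b} = i"
      using mono by blast
    moreover have "Min (h ` {a, b}) = x" "Max (h ` {a, b}) = y"
      using \<open>x = h a\<close> \<open>y = h b\<close> xy(3) by auto
    ultimately show ?thesis
      unfolding c_def by (auto split: if_splits)
  qed
  show ?thesis
  proof
    show "h ` H \<subseteq> A" "card (h ` H) = k"
      using h H' by (auto simp: card_image inj_on_subset)
    show "(\<forall>x\<in>h ` H. \<forall>y\<in>h ` H. x < y \<longrightarrow> P x y) \<or> (\<forall>x\<in>h ` H. \<forall>y\<in>h ` H. x < y \<longrightarrow> \<not> P x y)"
      using hom by (cases "i = 0") auto
  qed
qed

lemma ramsey_number_ge: "k \<le> ramsey_number k"
proof -
  obtain B :: "nat set" where "B \<subseteq> {..<ramsey_number k}" "card B = k"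
    using ramsey_number_homogeneous[of "{..<ramsey_number k}" k "\<lambda>_ _. True"] by auto
  then show ?thesis
    by (metis card_lessThan card_mono finite_lessThan)
qed

lemma ramsey_number_symmetric:
  fixes A :: "'a::linorder set"
  assumes "finite A" "ramsey_number k \<le> card A" and sym: "\<And>i j. R i j \<Longrightarrow> R j i"
  obtains B where "B \<subseteq> A" "card B = k"
    "(\<forall>i\<in>B. \<forall>j\<in>B. i \<noteq> j \<longrightarrow> R i j) \<or> (\<forall>i\<in>B. \<forall>j\<in>B. i \<noteq> j \<longrightarrow> \<not> R i j)"
proof -
  obtain B where "B \<subseteq> A" "card B = k"
    and hom: "(\<forall>i\<in>B. \<forall>j\<in>B. i < j \<longrightarrow> R i j) \<or> (\<forall>i\<in>B. \<forall>j\<in>B. i < j \<longrightarrow> \<not> R i j)"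
    using ramsey_number_homogeneous[OF assms(1,2)] by blast
  moreover have "(\<forall>i\<in>B. \<forall>j\<in>B. i \<noteq> j \<longrightarrow> R i j) \<or> (\<forall>i\<in>B. \<forall>j\<in>B. i \<noteq> j \<longrightarrow> \<not> R i j)"
    using hom by (metis linorder_neqE sym)
  ultimately show ?thesis using that by blast
qed

subsection \<open>Embedding the unavoidable graphs\<close>

lemma obtain_inj_lessThan:
  assumes "finite B" "n \<le> card B"
  obtains h where "inj_on h {..<n}" "\<And>i. i < n \<Longrightarrow> h i \<in> B"
  using card_le_inj[of "{..<n}" B] assms by auto

lemma complete_graph_induced_subI:
  assumes G: "is_graph G" and B: "finite B" "n \<le> card B"
    and verts: "\<And>i. i \<in> B \<Longrightarrow> g i \<in> verts G"
    and clique: "\<And>i j. i \<in> B \<Longrightarrow> j \<in> B \<Longrightarrow> i \<noteq> j \<Longrightarrow> adj G (g i) (g j)"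
  shows "complete_graph n \<prec> G"
proof -
  obtain h where h: "inj_on h {..<n}" "\<And>i. i < n \<Longrightarrow> h i \<in> B"
    using obtain_inj_lessThan[OF B] by blast
  have adj: "adj G (g (h i)) (g (h j)) \<longleftrightarrow> i \<noteq> j" if "i < n" "j < n" for i j
    using that h clique[of "h i" "h j"] is_graphD(5)[OF G] by (auto simp: inj_on_eq_iff)
  have "inj_on (g \<circ> h) {0..<n}"
    using adj is_graphD(5)[OF G] by (intro inj_onI) (metis atLeastLessThan_iff comp_apply)
  then show ?thesis
    unfolding induced_sub_def using adj h(2) verts by (intro exI[of _ "g \<circ> h"]) auto
qed

lemma index_cases_join: "(k::nat) < n + 2 \<Longrightarrow> k = 0 \<or> k = 1 \<or> (\<exists>i<n. k = i + 2)"
  by presburger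

lemma join_two_vertices_induced_sub:
  assumes G: "is_graph G" and vx: "v \<noteq> x" "v \<in> verts G" "x \<in> verts G"
    and B: "finite B" "n \<le> card B" "inj_on u B"
    and common: "\<And>j. j \<in> B \<Longrightarrow> adj G v (u j) \<and> adj G x (u j)"
    and indep: "\<And>i j. i \<in> B \<Longrightarrow> j \<in> B \<Longrightarrow> \<not> adj G (u i) (u j)"
  shows "(if adj G v x then K2_join_nK1 n else complete_bipartite 2 n) \<prec> G"
proof -
  obtain h where h: "inj_on h {..<n}" and hB: "\<And>i. i < n \<Longrightarrow> h i \<in> B"
    using obtain_inj_lessThan[OF B(1,2)] by blast
  note sym = is_graphD(4)[OF G] and irrefl = is_graphD(5)[OF G]
  have common': "adj G (u (h i)) v" "adj G (u (h i)) x" if "i < n" for i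
    using common[OF hB[OF that]] sym by auto
  have neq: "u (h i) \<noteq> v" "u (h i) \<noteq> x" "v \<noteq> u (h i)" "x \<noteq> u (h i)" if "i < n" for i
    using common[OF hB[OF that]] irrefl by auto
  have inj: "u (h i) = u (h j) \<longleftrightarrow> i = j" if "i < n" "j < n" for i j
    using that h B(3) hB by (metis inj_on_eq_iff lessThan_iff)
  define f where "f k = (if k = 0 then v else if k = 1 then x else u (h (k - 2)))" for k
  have f_inj: "inj_on f {0..<n + 2}"
  proof (rule inj_onI)
    fix k l
    assume "k \<in> {0..<n + 2}" "l \<in> {0..<n + 2}" "f k = f l"
    then show "k = l"
      using index_cases_join[of k n] index_cases_join[of l n] vx(1)
      by simp (elim disjE exE; simp add: f_def neq inj)
  qed
  have f_adj: "adj G (f k) (f l) \<longleftrightarrow> (if k < 2 \<and> l < 2 then k \<noteq> l \<and> adj G v x else (k < 2 \<longleftrightarrow> \<not> l < 2))"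
    if "k < n + 2" "l < n + 2" for k l
    using index_cases_join[OF that(1)] index_cases_join[OF that(2)] sym[of x v] sym[of v x]
    by (elim disjE exE; simp add: f_def common common' indep hB irrefl; blast)
  have "f k \<in> verts G" if "k < n + 2" for k
    using index_cases_join[OF that] vx common[OF hB] is_graphD(3)[OF G]
    by (auto simp: f_def) blast
  then show ?thesis
    unfolding induced_sub_def using f_inj f_adj by (intro exI[of _ f]) (auto simp: add.commute)
qed

definition induced_matching :: "'a graph \<Rightarrow> (nat \<Rightarrow> 'a) \<Rightarrow> (nat \<Rightarrow> 'a) \<Rightarrow> nat set \<Rightarrow> bool" where
  "induced_matching G u w I \<longleftrightarrow> inj_on u I \<and> (\<forall>i\<in>I. adj G (u i) (w i)) \<and>
     (\<forall>i\<in>I. \<forall>j\<in>I. \<not> adj G (u i) (u j) \<and> \<not> adj G (w i) (w j) \<and> (i \<noteq> j \<longrightarrow> \<not> adj G (u i) (w j)))"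

lemma induced_matching_reindex:
  assumes "induced_matching G u w I" "inj_on h J" "h ` J \<subseteq> I"
  shows "induced_matching G (u \<circ> h) (w \<circ> h) J"
  using assms unfolding induced_matching_def
  by (auto simp: image_subset_iff inj_on_def) (metis inj_onD)

lemma induced_matchingD:
  assumes G: "is_graph G" and M: "induced_matching G u w I" and ij: "i \<in> I" "j \<in> I"
  shows "adj G (u i) (w j) \<longleftrightarrow> i = j" "adj G (w j) (u i) \<longleftrightarrow> i = j"
    "\<not> adj G (u i) (u j)" "\<not> adj G (w i) (w j)" "u i = u j \<longleftrightarrow> i = j" "u i \<noteq> w j" "w j \<noteq> u i"
    "w i = w j \<longleftrightarrow> i = j"
proof -
  have uw: "adj G (u i) (w j) \<longleftrightarrow> i = j" if "i \<in> I" "j \<in> I" for i j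
    using M that unfolding induced_matching_def by (cases "i = j") auto
  then show "adj G (u i) (w j) \<longleftrightarrow> i = j" "adj G (w j) (u i) \<longleftrightarrow> i = j"
    using ij is_graphD(4)[OF G] by blast+
  show "\<not> adj G (u i) (u j)" "\<not> adj G (w i) (w j)" "u i = u j \<longleftrightarrow> i = j"
    using M ij unfolding induced_matching_def inj_on_def by auto
  show "u i \<noteq> w j" "w j \<noteq> u i"
    using uw[of j j] ij M is_graphD(4)[OF G] unfolding induced_matching_def by auto
  show "w i = w j \<longleftrightarrow> i = j"
    using uw[of i i] uw[of i j] ij by auto
qed

lemma index_cases_star:
  "(k::nat) \<le> 2 * n \<Longrightarrow> k = 0 \<or> (\<exists>i<n. k = i + 1) \<or> (\<exists>i<n. k = i + n + 1)"
  by presburger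

lemma subdivided_star_induced_subI:
  assumes G: "is_graph G" and v: "v \<in> verts G" and M: "induced_matching G u w {..<n}"
    and vu: "\<And>i. i < n \<Longrightarrow> adj G v (u i)"
    and vw: "\<And>i. i < n \<Longrightarrow> \<not> adj G v (w i) \<and> w i \<noteq> v"
  shows "subdivided_star n \<prec> G"
proof -
  note sym = is_graphD(4)[OF G] and irrefl = is_graphD(5)[OF G]
  note match = induced_matchingD[OF G M, unfolded lessThan_iff]
  have uv: "adj G (u i) v" "\<not> adj G (w i) v" "u i \<noteq> v" "v \<noteq> u i" "v \<noteq> w i" "w i \<noteq> v"
    if "i < n" for i
    using vu[OF that] vw[OF that] sym irrefl by auto
  define f where "f k = (if k = 0 then v else if k \<le> n then u (k - 1) else w (k - n - 1))" for k
  have f: "f 0 = v" "\<And>i. i < n \<Longrightarrow> f (Suc i) = u i" "\<And>i. i < n \<Longrightarrow> f (Suc (i + n)) = w i"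
    by (auto simp: f_def)
  have "inj_on f {0..2 * n}"
  proof (rule inj_onI)
    fix k l
    assume "k \<in> {0..2 * n}" "l \<in> {0..2 * n}" "f k = f l"
    then show "k = l"
      using index_cases_star[of k n] index_cases_star[of l n]
      by simp (elim disjE exE conjE; simp add: f uv match)
  qed
  moreover have "adj G (f k) (f l) \<longleftrightarrow> adj (subdivided_star n) k l" if "k \<le> 2 * n" "l \<le> 2 * n" for k l
    using index_cases_star[OF that(1)] index_cases_star[OF that(2)]
    by (elim disjE exE conjE) (auto simp: f vu uv vw match irrefl)
  moreover have "f k \<in> verts G" if "k \<le> 2 * n" for k
    using index_cases_star[OF that] v vu uv is_graphD(3)[OF G] M
    unfolding induced_matching_def by (auto simp: f) blast+
  ultimately show ?thesis
    unfolding induced_sub_def by (intro exI[of _ f]) auto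
qed

lemma index_cases_fan:
  "(k::nat) \<le> 2 * n \<Longrightarrow> k = 0 \<or> (\<exists>i<n. k = 2 * i + 1) \<or> (\<exists>i<n. k = 2 * i + 2)"
  by presburger

lemma K1_join_nK2_induced_subI:
  assumes G: "is_graph G" and v: "v \<in> verts G" and M: "induced_matching G u w {..<n}"
    and vuw: "\<And>i. i < n \<Longrightarrow> adj G v (u i) \<and> adj G v (w i)"
  shows "K1_join_nK2 n \<prec> G"
proof -
  note sym = is_graphD(4)[OF G] and irrefl = is_graphD(5)[OF G]
  note match = induced_matchingD[OF G M, unfolded lessThan_iff]
  have uv: "adj G (u i) v" "adj G (w i) v" "u i \<noteq> v" "v \<noteq> u i" "v \<noteq> w i" "w i \<noteq> v"
    if "i < n" for i
    using vuw[OF that] sym irrefl by auto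
  define f where
    "f k = (if k = 0 then v else if odd k then u ((k - 1) div 2) else w ((k - 1) div 2))" for k
  have f: "f 0 = v" "f (Suc (2 * i)) = u i" "f (Suc (Suc (2 * i))) = w i" for i
    by (auto simp: f_def)
  have "inj_on f {0..2 * n}"
  proof (rule inj_onI)
    fix k l
    assume "k \<in> {0..2 * n}" "l \<in> {0..2 * n}" "f k = f l"
    then show "k = l"
      using index_cases_fan[of k n] index_cases_fan[of l n]
      by simp (elim disjE exE conjE; simp add: f uv match)
  qed
  moreover have "adj G (f k) (f l) \<longleftrightarrow> adj (K1_join_nK2 n) k l" if "k \<le> 2 * n" "l \<le> 2 * n" for k l
    using index_cases_fan[OF that(1)] index_cases_fan[OF that(2)] that
    by (elim disjE exE conjE) (auto simp: f vuw uv match irrefl)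
  moreover have "f k \<in> verts G" if "k \<le> 2 * n" for k
    using index_cases_fan[OF that] v vuw is_graphD(3)[OF G] by (auto simp: f) blast+
  ultimately show ?thesis
    unfolding induced_sub_def by (intro exI[of _ f]) auto
qed

subsection \<open>A vertex with many inner neighbours\<close>

definition matched_neighbours :: "'a graph \<Rightarrow> 'a \<Rightarrow> (nat \<Rightarrow> 'a) \<Rightarrow> (nat \<Rightarrow> 'a) \<Rightarrow> nat set \<Rightarrow> bool" where
  "matched_neighbours G v u w I \<longleftrightarrow> inj_on u I \<and>
     (\<forall>i\<in>I. adj G v (u i) \<and> adj G (u i) (w i) \<and> w i \<noteq> v) \<and> (\<forall>i\<in>I. \<forall>j\<in>I. \<not> adj G (u i) (u j))"

lemma matched_neighbours_subset:
  "matched_neighbours G v u w I \<Longrightarrow> J \<subseteq> I \<Longrightarrow> matched_neighbours G v u w J"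
  unfolding matched_neighbours_def by (meson inj_on_subset subsetD)

lemma unavoidable_if_common_neighbour:
  assumes G: "is_graph G" and v: "v \<in> verts G" and M: "matched_neighbours G v u w B"
    and B: "finite B" "n \<le> card B" and m: "m \<in> B"
    and common: "\<And>j. j \<in> B \<Longrightarrow> j \<noteq> m \<Longrightarrow> adj G (w m) (u j)"
  shows "\<exists>F\<in>unavoidable_family n. F \<prec> G"
proof -
  have wm: "v \<noteq> w m" "w m \<in> verts G" "adj G (w m) (u m)"
    using M m is_graphD(3,4)[OF G] unfolding matched_neighbours_def by auto
  have "adj G v (u j) \<and> adj G (w m) (u j)" if "j \<in> B" for j
    using M that common[OF that] wm(3) unfolding matched_neighbours_def by (cases "j = m") auto
  then have "(if adj G v (w m) then K2_join_nK1 n else complete_bipartite 2 n) \<prec> G"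
    using M unfolding matched_neighbours_def
    by (intro join_two_vertices_induced_sub[OF G wm(1) v wm(2) B, where u = u]) auto
  then show ?thesis
    unfolding unavoidable_family_def by (auto split: if_splits)
qed

lemma unavoidable_if_uncrossed_matched_neighbours:
  assumes G: "is_graph G" and v: "v \<in> verts G" and M: "matched_neighbours G v u w A"
    and A: "finite A" "ramsey_number n \<le> card A"
    and uncrossed: "\<And>i j. i \<in> A \<Longrightarrow> j \<in> A \<Longrightarrow> i \<noteq> j \<Longrightarrow> \<not> adj G (u i) (w j)"
    and t: "\<And>i. i \<in> A \<Longrightarrow> adj G v (w i) \<longleftrightarrow> t"
  shows "\<exists>F\<in>unavoidable_family n. F \<prec> G"
proof -
  obtain B where B: "B \<subseteq> A" "card B = n"
    and hom: "(\<forall>i\<in>B. \<forall>j\<in>B. i \<noteq> j \<longrightarrow> adj G (w i) (w j)) \<or> (\<forall>i\<in>B. \<forall>j\<in>B. i \<noteq> j \<longrightarrow> \<not> adj G (w i) (w j))"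
    using ramsey_number_symmetric[OF A, of "\<lambda>i j. adj G (w i) (w j)"] is_graphD(4)[OF G] by blast
  have fin: "finite B"
    using A(1) B(1) by (rule finite_subset[rotated])
  show ?thesis
  proof (cases "\<forall>i\<in>B. \<forall>j\<in>B. i \<noteq> j \<longrightarrow> adj G (w i) (w j)")
    case True
    have "complete_graph n \<prec> G"
    proof (rule complete_graph_induced_subI[OF G fin])
      show "w i \<in> verts G" if "i \<in> B" for i
        using M B(1) that is_graphD(3)[OF G] unfolding matched_neighbours_def by blast
    qed (use B True in auto)
    then show ?thesis
      unfolding unavoidable_family_def by blast
  next
    case False
    then have "induced_matching G u w B"
      using hom M B(1) uncrossed is_graphD(5)[OF G]
      unfolding induced_matching_def matched_neighbours_def by (metis inj_on_subset subsetD)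
    moreover obtain h where h: "inj_on h {..<n}" "\<And>i. i < n \<Longrightarrow> h i \<in> B"
      using obtain_inj_lessThan[OF fin] B(2) by blast
    ultimately have IM: "induced_matching G (u \<circ> h) (w \<circ> h) {..<n}"
      by (intro induced_matching_reindex) auto
    have vu: "adj G v (u (h i)) \<and> w (h i) \<noteq> v \<and> (adj G v (w (h i)) \<longleftrightarrow> t)" if "i < n" for i
      using M h(2)[OF that] B(1) t unfolding matched_neighbours_def by blast
    show ?thesis
    proof (cases t)
      case True
      then have "K1_join_nK2 n \<prec> G"
        using vu by (intro K1_join_nK2_induced_subI[OF G v IM]) auto
      then show ?thesis
        unfolding unavoidable_family_def by blast
    next
      case False
      then have "subdivided_star n \<prec> G"
        using vu by (intro subdivided_star_induced_subI[OF G v IM]) auto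
      then show ?thesis
        unfolding unavoidable_family_def by blast
    qed
  qed
qed

text \<open>If all cross edges \<open>w\<^sub>i u\<^sub>j\<close> with \<open>i < j\<close> (or all with \<open>i > j\<close>) are present, the vertex \<open>w\<^sub>m\<close>
  for the least (greatest) index \<open>m\<close> is, besides \<open>v\<close>, adjacent to all the \<open>u\<^sub>j\<close>. By Ramsey's
  theorem one of these two cases occurs, or no cross edges are left at all.\<close>

lemma unavoidable_if_matched_neighbours_half_uncrossed:
  assumes G: "is_graph G" and v: "v \<in> verts G" and M: "matched_neighbours G v u w A" and "0 < n"
    and A: "finite A" "ramsey_number (ramsey_number n) \<le> card A"
    and no_up: "\<And>i j. i \<in> A \<Longrightarrow> j \<in> A \<Longrightarrow> i < j \<Longrightarrow> \<not> adj G (w i) (u j)"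
    and t: "\<And>i. i \<in> A \<Longrightarrow> adj G v (w i) \<longleftrightarrow> t"
  shows "\<exists>F\<in>unavoidable_family n. F \<prec> G"
proof -
  obtain C where C: "C \<subseteq> A" "card C = ramsey_number n"
    and hom: "(\<forall>i\<in>C. \<forall>j\<in>C. i < j \<longrightarrow> adj G (w j) (u i)) \<or> (\<forall>i\<in>C. \<forall>j\<in>C. i < j \<longrightarrow> \<not> adj G (w j) (u i))"
    using ramsey_number_homogeneous[OF A, of "\<lambda>i j. adj G (w j) (u i)"] by blast
  have finC: "finite C" "C \<noteq> {}" "n \<le> card C"
    using finite_subset[OF C(1) A(1)] C(2) ramsey_number_ge[of n] \<open>0 < n\<close> by auto
  note MC = matched_neighbours_subset[OF M C(1)]
  show ?thesis
  proof (cases "\<forall>i\<in>C. \<forall>j\<in>C. i < j \<longrightarrow> adj G (w j) (u i)")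
    case True
    have "adj G (w (Max C)) (u j)" if "j \<in> C" "j \<noteq> Max C" for j
    proof -
      have "j < Max C"
        using Max_ge[OF finC(1) that(1)] that(2) by simp
      then show ?thesis
        using True that(1) Max_in[OF finC(1,2)] by blast
    qed
    then show ?thesis
      by (rule unavoidable_if_common_neighbour[OF G v MC finC(1,3) Max_in[OF finC(1,2)]])
  next
    case False
    then have up: "\<forall>i\<in>C. \<forall>j\<in>C. i < j \<longrightarrow> \<not> adj G (w j) (u i)"
      using hom by blast
    have "\<not> adj G (u i) (w j)" if "i \<in> C" "j \<in> C" "i \<noteq> j" for i j
    proof (cases "i < j")
      case True
      then show ?thesis using up that is_graphD(4)[OF G] by blast
    next
      case False
      then have "j < i" using that(3) by simp
      then have "\<not> adj G (w j) (u i)" using no_up C(1) that(1,2) by blast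
      then show ?thesis using is_graphD(4)[OF G] by blast
    qed
    then show ?thesis
      using C t
      by (intro unavoidable_if_uncrossed_matched_neighbours[OF G v MC finC(1), where t = t]) auto
  qed
qed

lemma unavoidable_if_matched_neighbours:
  assumes G: "is_graph G" and v: "v \<in> verts G" and M: "matched_neighbours G v u w A" and "0 < n"
    and A: "finite A" "ramsey_number (ramsey_number (ramsey_number n)) \<le> card A"
    and t: "\<And>i. i \<in> A \<Longrightarrow> adj G v (w i) \<longleftrightarrow> t"
  shows "\<exists>F\<in>unavoidable_family n. F \<prec> G"
proof -
  obtain B where B: "B \<subseteq> A" "card B = ramsey_number (ramsey_number n)"
    and hom: "(\<forall>i\<in>B. \<forall>j\<in>B. i < j \<longrightarrow> adj G (w i) (u j)) \<or> (\<forall>i\<in>B. \<forall>j\<in>B. i < j \<longrightarrow> \<not> adj G (w i) (u j))"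
    using ramsey_number_homogeneous[OF A, of "\<lambda>i j. adj G (w i) (u j)"] by blast
  have finB: "finite B" "B \<noteq> {}" "n \<le> card B"
    using finite_subset[OF B(1) A(1)] B(2) \<open>0 < n\<close>
      ramsey_number_ge[of n] ramsey_number_ge[of "ramsey_number n"] by auto
  note MB = matched_neighbours_subset[OF M B(1)]
  show ?thesis
  proof (cases "\<forall>i\<in>B. \<forall>j\<in>B. i < j \<longrightarrow> adj G (w i) (u j)")
    case True
    have "adj G (w (Min B)) (u j)" if "j \<in> B" "j \<noteq> Min B" for j
    proof -
      have "Min B < j"
        using Min_le[OF finB(1) that(1)] that(2) by simp
      then show ?thesis
        using True that(1) Min_in[OF finB(1,2)] by blast
    qed
    then show ?thesis
      by (rule unavoidable_if_common_neighbour[OF G v MB finB(1,3) Min_in[OF finB(1,2)]])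
  next
    case False
    then show ?thesis
      using hom B t
      by (intro unavoidable_if_matched_neighbours_half_uncrossed[OF G v MB \<open>0 < n\<close> finB(1),
            where t = t]) auto
  qed
qed

lemma pigeonhole_bool:
  assumes "finite B" "2 * k \<le> card B"
  obtains C t where "C \<subseteq> B" "k \<le> card C" "\<And>i. i \<in> C \<Longrightarrow> P i \<longleftrightarrow> t"
proof -
  have "B = {i \<in> B. P i} \<union> {i \<in> B. \<not> P i}"
    by blast
  then have "card B = card {i \<in> B. P i} + card {i \<in> B. \<not> P i}"
    using assms(1) card_Un_disjoint[of "{i \<in> B. P i}" "{i \<in> B. \<not> P i}"] by auto
  then have "k \<le> card {i \<in> B. P i} \<or> k \<le> card {i \<in> B. \<not> P i}"
    using assms(2) by linarith
  moreover have "{i \<in> B. P i} \<subseteq> B" "{i \<in> B. \<not> P i} \<subseteq> B"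
    by auto
  ultimately show ?thesis
    using that[of "{i \<in> B. P i}" True] that[of "{i \<in> B. \<not> P i}" False] by blast
qed

definition inner_degree_bound :: "nat \<Rightarrow> nat" where
  "inner_degree_bound n = ramsey_number (2 * ramsey_number (ramsey_number (ramsey_number n)))"

lemma unavoidable_if_many_inner_neighbours:
  assumes G: "is_graph G" and v: "v \<in> verts G" and "0 < n"
    and many: "inner_degree_bound n \<le> card {x \<in> inner_vertices G. adj G v x}"
  shows "\<exists>F\<in>unavoidable_family n. F \<prec> G"
proof -
  let ?R = "ramsey_number (ramsey_number (ramsey_number n))"
  obtain u where u: "inj_on u {..<inner_degree_bound n}"
    and u_inner: "\<And>i. i < inner_degree_bound n \<Longrightarrow> u i \<in> inner_vertices G \<and> adj G v (u i)"
    using obtain_inj_lessThan[OF _ many] finite_inner_vertices[OF G] by auto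
  have "\<forall>i\<in>{..<inner_degree_bound n}. \<exists>z. adj G (u i) z \<and> z \<noteq> v"
    using other_neighbour_if_inner[OF G] u_inner by (metis lessThan_iff)
  then obtain w where w: "\<And>i. i < inner_degree_bound n \<Longrightarrow> adj G (u i) (w i) \<and> w i \<noteq> v"
    by (metis bchoice lessThan_iff)
  obtain B where B: "B \<subseteq> {..<inner_degree_bound n}" "card B = 2 * ?R"
    and hom: "(\<forall>i\<in>B. \<forall>j\<in>B. i \<noteq> j \<longrightarrow> adj G (u i) (u j)) \<or> (\<forall>i\<in>B. \<forall>j\<in>B. i \<noteq> j \<longrightarrow> \<not> adj G (u i) (u j))"
    using ramsey_number_symmetric[of "{..<inner_degree_bound n}" "2 * ?R" "\<lambda>i j. adj G (u i) (u j)"]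
      is_graphD(4)[OF G] unfolding inner_degree_bound_def by auto
  have finB: "finite B" "n \<le> card B"
    using finite_subset[OF B(1)] B(2) ramsey_number_ge[of n] ramsey_number_ge[of "ramsey_number n"]
      ramsey_number_ge[of "ramsey_number (ramsey_number n)"] by auto
  show ?thesis
  proof (cases "\<forall>i\<in>B. \<forall>j\<in>B. i \<noteq> j \<longrightarrow> adj G (u i) (u j)")
    case True
    have "complete_graph n \<prec> G"
    proof (rule complete_graph_induced_subI[OF G finB, where g = u])
      show "u i \<in> verts G" if "i \<in> B" for i
        using that B(1) u_inner inner_vertices_subset[of G] by blast
    qed (use True in blast)
    then show ?thesis
      unfolding unavoidable_family_def by blast
  next
    case False
    then have M: "matched_neighbours G v u w B"
      using hom u B(1) u_inner w is_graphD(5)[OF G] unfolding matched_neighbours_def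
      by (metis inj_on_subset lessThan_iff subsetD)
    obtain C t where C: "C \<subseteq> B" "?R \<le> card C"
      and t: "\<And>i. i \<in> C \<Longrightarrow> adj G v (w i) \<longleftrightarrow> t"
      using pigeonhole_bool[OF finB(1) eq_imp_le[OF B(2)[symmetric]], of "\<lambda>i. adj G v (w i)"]
      by blast
    show ?thesis
      using unavoidable_if_matched_neighbours[OF G v matched_neighbours_subset[OF M C(1)] \<open>0 < n\<close>
            finite_subset[OF C(1) finB(1)] C(2) t] .
  qed
qed

subsection \<open>Bounding the inner vertices\<close>

lemma card_inner_vertices_le:
  assumes G: "is_graph G" and "connected G" and "0 < n"
    and free: "family_free (unavoidable_family n) G"
  shows "card (inner_vertices G) \<le> (inner_degree_bound n + 1) ^ n"
proof (cases "inner_vertices G = {}")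
  case False
  let ?D = "inner_vertices G"
  let ?G' = "induced_subgraph G ?D"
  have G': "is_graph ?G'" "connected ?G'"
    using is_graph_induced_subgraph[OF G inner_vertices_subset]
      connected_inner_vertices[OF G \<open>connected G\<close>] False by auto
  have "degree ?G' x \<le> inner_degree_bound n" if "x \<in> ?D" for x
  proof -
    have "\<not> inner_degree_bound n \<le> card {y \<in> ?D. adj G x y}"
      using unavoidable_if_many_inner_neighbours[OF G _ \<open>0 < n\<close>, of x] free that
        inner_vertices_subset[of G] unfolding family_free_def by blast
    then show ?thesis
      by (simp add: degree_induced_subgraph[OF that])
  qed
  moreover have "\<not> path_graph n \<prec> ?G'"
    using free induced_sub_trans[OF _ induced_subgraph_induced_sub[OF inner_vertices_subset]]
    unfolding family_free_def unavoidable_family_def by blast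
  ultimately show ?thesis
    using card_verts_le_if_path_free[OF G'] by simp
qed simp

theorem theorem1p4:
  fixes \<H> :: "nat graph set"
  assumes "\<forall>H\<in>\<H>. is_graph H"
  shows "(\<exists>c::nat. \<forall>G :: nat graph. is_graph G \<and> connected G \<and> family_free \<H> G
            \<longrightarrow> card {v \<in> verts G. degree G v \<ge> 2} < c)
     \<longleftrightarrow> (\<exists>n::nat. n > 0 \<and> family_le \<H> (unavoidable_family n))"
  unfolding inner_vertices_def[symmetric]
proof
  assume "\<exists>c. \<forall>G :: nat graph. is_graph G \<and> connected G \<and> family_free \<H> G \<longrightarrow>
    card (inner_vertices G) < c"
  then obtain c where c: "\<And>G :: nat graph. is_graph G \<Longrightarrow> connected G \<Longrightarrow> family_free \<H> G \<Longrightarrow>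
      card (inner_vertices G) < c"
    by blast
  have "\<not> family_free \<H> F" if F: "F \<in> unavoidable_family (c + 2)" for F
    using c[OF is_graph_unavoidable[OF F] connected_unavoidable[OF _ F]]
      card_inner_vertices_unavoidable[OF F] by fastforce
  then have "family_le \<H> (unavoidable_family (c + 2))"
    unfolding family_le_def family_free_def by blast
  then show "\<exists>n>0. family_le \<H> (unavoidable_family n)"
    by (intro exI[of _ "c + 2"]) simp
next
  assume "\<exists>n>0. family_le \<H> (unavoidable_family n)"
  then obtain n where "0 < n" and le: "family_le \<H> (unavoidable_family n)"
    by blast
  have "card (inner_vertices G) < (inner_degree_bound n + 1) ^ n + 1"
    if "is_graph G" "connected G" "family_free \<H> G" for G :: "nat graph"
    using card_inner_vertices_le[OF that(1,2) \<open>0 < n\<close> family_free_if_le[OF le that(3)]] by simp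
  then show "\<exists>c. \<forall>G :: nat graph. is_graph G \<and> connected G \<and> family_free \<H> G \<longrightarrow>
      card (inner_vertices G) < c"
    by blast
qed

end
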